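(* Let $p>1$ and let $\{X_\alpha\}$ be an arbitrary family of positive real-valued random variables. Then there exists a random variable $Y$ with $\mathbb{E}|Y|^p<\infty$ such that $X_\alpha\le_{\mathrm{icx}}Y$ for all $\alpha$ if and only if there exists a random variable $Z$ with $\mathbb{E}|Z|^p<\infty$ such that $X_\alpha\le_{\mathrm{st}}Z$ for all $\alpha$.
   Context: "Positive" means nonnegative; the random variables need not be on a common probability space. $X_1\le_{\mathrm{st}}X_2$ means $\mathbb{P}(X_1>t)\le\mathbb{P}(X_2>t)$ for all $t\in\mathbb{R}$ (equivalently $\mathbb{E}\phi(X_1)\le\mathbb{E}\phi(X_2)$ for all increasing measurable $\phi\ge 0$). For positive $X_1,X_2$, $X_1\le_{\mathrm{icx}}X_2$ means $\mathbb{E}\phi(X_1)\le\mathbb{E}\phi(X_2)$ for all increasing convex $\phi:\mathbb{R}_+\to\mathbb{R}_+$, equivalently $\mathbb{E}(X_1-t)_+\le\mathbb{E}(X_2-t)_+$ for all $t\ge0$. *)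

theory Defs
  imports "HOL-Probability.Probability"
begin

text \<open>A real-valued random variable is represented by its law: a probability
  measure on the Borel sets of the real line.  All notions involved (moments,
  stochastic order, increasing convex order) depend only on laws, and the
  variables need not live on a common probability space.\<close>

definition real_law :: "real measure \<Rightarrow> bool" where
  "real_law \<mu> \<longleftrightarrow> prob_space \<mu> \<and> sets \<mu> = sets borel"

definition positive_law :: "real measure \<Rightarrow> bool" where
  "positive_law \<mu> \<longleftrightarrow> real_law \<mu> \<and> (AE x in \<mu>. 0 \<le> x)"

definition finite_pth_moment :: "real \<Rightarrow> real measure \<Rightarrow> bool" where
  "finite_pth_moment p \<mu> \<longleftrightarrow> (\<integral>\<^sup>+ x. ennreal (\<bar>x\<bar> powr p) \<partial>\<mu>) < \<infinity>"

definition st_le :: "real measure \<Rightarrow> real measure \<Rightarrow> bool" where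
  "st_le \<mu> \<nu> \<longleftrightarrow> (\<forall>t::real. measure \<mu> {t<..} \<le> measure \<nu> {t<..})"

definition icx_le :: "real measure \<Rightarrow> real measure \<Rightarrow> bool" where
  "icx_le \<mu> \<nu> \<longleftrightarrow>
     (\<forall>\<phi>::real \<Rightarrow> real. mono_on {0..} \<phi> \<and> convex_on {0..} \<phi> \<and> (\<forall>x\<ge>0. 0 \<le> \<phi> x) \<longrightarrow>
        (\<integral>\<^sup>+ x. ennreal (\<phi> x) \<partial>\<mu>) \<le> (\<integral>\<^sup>+ x. ennreal (\<phi> x) \<partial>\<nu>))"

end

theory Submission
  imports Defs
begin

text \<open>
  (st \<Longrightarrow> icx) If X_\<alpha> \<le>st Z, then by the layer-cake formula E \<psi>(X_\<alpha>) \<le> E \<psi>(Z) for every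
  increasing \<psi> \<ge> 0, since the upper level sets of \<psi> are half-lines.  Test functions of the
  icx order only matter on [0,\<infinity>), so Y = max Z 0 is a positive icx-bound, and its p-th
  moment is at most that of Z.

  (icx \<Longrightarrow> st) Testing icx against the hinges (x - 2^k)+ gives the Markov-type bound
  2^k P(X_\<alpha> > 2^(k+1)) \<le> E(Y - 2^k)+ =: \<pi>_k, and summing the pointwise inequality
  \<Sum>_k 2^(k(p-1)) (x - 2^k)+ \<le> C |x|^p shows \<Sum>_k 2^(k(p-1)) \<pi>_k < \<infinity>.  Hence the tail bounds
  w_k = \<pi>_k / 2^k satisfy \<Sum>_k w_k 2^(kp) < \<infinity>, and a discrete law placing mass w_k at
  the dyadic points 2^(k+2) (plus the leftover mass at the bottom) dominates every X_\<alpha>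
  stochastically and has finite p-th moment.
\<close>

lemma real_law_sets_space:
  assumes "real_law \<mu>"
  shows "sets \<mu> = sets borel" "space \<mu> = UNIV"
  using assms sets_eq_imp_space_eq[of \<mu> borel] by (auto simp: real_law_def)

lemma real_law_borel_measurable:
  assumes "real_law \<mu>" "f \<in> borel \<rightarrow>\<^sub>M N"
  shows "f \<in> \<mu> \<rightarrow>\<^sub>M N"
  using assms(2) by (simp add: measurable_cong_sets[OF real_law_sets_space(1)[OF assms(1)] refl])

lemma up_closed_real_cases:
  fixes U :: "real set"
  assumes up: "\<And>x y. x \<in> U \<Longrightarrow> x \<le> y \<Longrightarrow> y \<in> U"
  shows "U = {} \<or> U = UNIV \<or> (\<exists>t. U = {t<..}) \<or> (\<exists>t. U = {t..})"
proof (cases "U = {} \<or> U = UNIV")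
  case False
  then obtain x0 y0 where x0: "x0 \<notin> U" and y0: "y0 \<in> U" by blast
  have bdd: "bdd_below U"
    using up x0 by (meson bdd_belowI linear)
  define t where "t = Inf U"
  have t_le: "t \<le> y" if "y \<in> U" for y
    unfolding t_def by (rule cInf_lower[OF that bdd])
  have above_t: "y \<in> U" if "t < y" for y
  proof -
    obtain z where "z \<in> U" "z < y"
      using cInf_lessD[of U y] y0 \<open>t < y\<close> unfolding t_def by blast
    then show ?thesis using up by auto
  qed
  have "U = (if t \<in> U then {t..} else {t<..})"
    using t_le above_t by (auto simp: le_less)
  then show ?thesis by (cases "t \<in> U") auto
qed blast

text \<open>The stochastic order compares the masses of open upper half-lines, and by continuity
  from above also of closed ones, hence of all upward closed sets.\<close>

lemma st_le_Ioi:
  assumes "real_law \<mu>" "real_law \<nu>" "st_le \<mu> \<nu>"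
  shows "emeasure \<mu> {t<..} \<le> emeasure \<nu> {t<..}"
proof -
  interpret \<mu>: prob_space \<mu> using assms(1) by (simp add: real_law_def)
  interpret \<nu>: prob_space \<nu> using assms(2) by (simp add: real_law_def)
  show ?thesis
    using assms(3) real_law_sets_space(1)[OF assms(1)] real_law_sets_space(1)[OF assms(2)]
    by (simp add: st_le_def \<mu>.emeasure_eq_measure \<nu>.emeasure_eq_measure)
qed

lemma Ici_eq_INT_Ioi: "{t..} = (\<Inter>n. {t - inverse (real (Suc n))<..})" for t :: real
proof (intro antisym subsetI)
  fix x assume "x \<in> {t..}"
  then show "x \<in> (\<Inter>n. {t - inverse (real (Suc n))<..})"
    by (auto intro: less_le_trans[of _ t])
next
  fix x assume x: "x \<in> (\<Inter>n. {t - inverse (real (Suc n))<..})"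
  show "x \<in> {t..}"
  proof (rule ccontr)
    assume "x \<notin> {t..}"
    then obtain n where "inverse (real (Suc n)) < t - x"
      using reals_Archimedean[of "t - x"] by auto
    moreover have "x \<in> {t - inverse (real (Suc n))<..}" using x by blast
    ultimately show False by simp
  qed
qed

lemma st_le_Ici:
  assumes "real_law \<mu>" "real_law \<nu>" "st_le \<mu> \<nu>"
  shows "emeasure \<mu> {t..} \<le> emeasure \<nu> {t..}"
proof -
  interpret \<nu>: prob_space \<nu> using assms(2) by (simp add: real_law_def)
  define A where "A n = {t - inverse (real (Suc n))<..}" for n
  have Ici_eq: "{t..} = (\<Inter>n. A n)"
    unfolding A_def by (rule Ici_eq_INT_Ioi)
  have "A (Suc n) \<subseteq> A n" for n
  proof -
    have "inverse (real (Suc (Suc n))) \<le> inverse (real (Suc n))"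
      by (rule le_imp_inverse_le) auto
    then show ?thesis unfolding A_def by auto
  qed
  then have "decseq A" by (rule decseq_SucI)
  moreover have "range A \<subseteq> sets \<nu>"
    unfolding A_def real_law_sets_space(1)[OF assms(2)] by auto
  ultimately have "(\<lambda>n. emeasure \<nu> (A n)) \<longlonglongrightarrow> emeasure \<nu> {t..}"
    unfolding Ici_eq by (intro Lim_emeasure_decseq) auto
  moreover have "emeasure \<mu> {t..} \<le> emeasure \<nu> (A n)" for n
  proof -
    have "emeasure \<mu> {t..} \<le> emeasure \<mu> (A n)"
      unfolding Ici_eq A_def
      by (intro emeasure_mono) (auto simp: real_law_sets_space(1)[OF assms(1)])
    also have "\<dots> \<le> emeasure \<nu> (A n)"
      unfolding A_def by (rule st_le_Ioi[OF assms])
    finally show ?thesis .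
  qed
  ultimately show ?thesis
    using LIMSEQ_le_const by blast
qed

lemma st_le_up_closed:
  assumes "real_law \<mu>" "real_law \<nu>" "st_le \<mu> \<nu>"
    and up: "\<And>x y. x \<in> U \<Longrightarrow> x \<le> y \<Longrightarrow> y \<in> U"
  shows "emeasure \<mu> U \<le> emeasure \<nu> U"
proof -
  interpret \<mu>: prob_space \<mu> using assms(1) by (simp add: real_law_def)
  interpret \<nu>: prob_space \<nu> using assms(2) by (simp add: real_law_def)
  have "emeasure \<mu> UNIV \<le> emeasure \<nu> UNIV"
    using real_law_sets_space(2)[OF assms(1)] real_law_sets_space(2)[OF assms(2)]
      \<mu>.emeasure_space_1 \<nu>.emeasure_space_1 by simp
  moreover have "U = {} \<or> U = UNIV \<or> (\<exists>t. U = {t<..}) \<or> (\<exists>t. U = {t..})"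
    using up by (rule up_closed_real_cases)
  ultimately show ?thesis
    using st_le_Ioi[OF assms(1-3)] st_le_Ici[OF assms(1-3)] by (elim disjE exE) simp_all
qed

lemma nn_integral_layer_cake:
  fixes f :: "'a \<Rightarrow> real"
  assumes "sigma_finite_measure M" "f \<in> borel_measurable M"
    and nonneg: "\<And>x. x \<in> space M \<Longrightarrow> 0 \<le> f x"
  shows "(\<integral>\<^sup>+ x. ennreal (f x) \<partial>M)
    = (\<integral>\<^sup>+ s. indicator {0..} s * emeasure M {x \<in> space M. s < f x} \<partial>lborel)"
proof -
  interpret pair_sigma_finite M lborel
    using assms(1) by (simp add: lborel.sigma_finite_measure_axioms pair_sigma_finite.intro)
  have "{z \<in> space (M \<Otimes>\<^sub>M lborel). 0 \<le> snd z \<and> snd z < f (fst z)} \<in> sets (M \<Otimes>\<^sub>M lborel)"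
    using assms(2) by measurable
  then have "(\<lambda>z. indicator {z. 0 \<le> snd z \<and> snd z < f (fst z)} z :: ennreal)
      \<in> borel_measurable (M \<Otimes>\<^sub>M lborel)"
    by (intro borel_measurable_indicator') auto
  moreover have "(\<lambda>(x, s). indicator {0..<f x} s :: ennreal)
      = (\<lambda>z. indicator {z. 0 \<le> snd z \<and> snd z < f (fst z)} z)"
    by (auto simp: indicator_def fun_eq_iff)
  ultimately have joint: "(\<lambda>(x, s). indicator {0..<f x} s :: ennreal) \<in> borel_measurable (M \<Otimes>\<^sub>M lborel)"
    by simp
  have "(\<integral>\<^sup>+ x. ennreal (f x) \<partial>M) = (\<integral>\<^sup>+ x. (\<integral>\<^sup>+ s. indicator {0..<f x} s \<partial>lborel) \<partial>M)"
    using nonneg by (intro nn_integral_cong) simp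
  also have "\<dots> = (\<integral>\<^sup>+ s. (\<integral>\<^sup>+ x. indicator {0..<f x} s \<partial>M) \<partial>lborel)"
    using Fubini'[of "\<lambda>x s. indicator {0..<f x} s"] joint by simp
  also have "\<dots> = (\<integral>\<^sup>+ s. indicator {0..} s * emeasure M {x \<in> space M. s < f x} \<partial>lborel)"
  proof (intro nn_integral_cong)
    fix s :: real
    have "{x \<in> space M. s < f x} \<in> sets M"
      using assms(2) by measurable
    moreover have "(\<integral>\<^sup>+ x. indicator {0..<f x} s \<partial>M)
        = (\<integral>\<^sup>+ x. indicator {0..} s * indicator {x \<in> space M. s < f x} x \<partial>M)"
      by (intro nn_integral_cong) (simp add: indicator_def)
    ultimately show "(\<integral>\<^sup>+ x. indicator {0..<f x} s \<partial>M)
        = indicator {0..} s * emeasure M {x \<in> space M. s < f x}"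
      by (simp add: nn_integral_cmult_indicator)
  qed
  finally show ?thesis .
qed

lemma st_le_nn_integral_mono:
  fixes \<psi> :: "real \<Rightarrow> real"
  assumes "real_law \<mu>" "real_law \<nu>" "st_le \<mu> \<nu>" "mono \<psi>" "\<And>x. 0 \<le> \<psi> x"
  shows "(\<integral>\<^sup>+ x. ennreal (\<psi> x) \<partial>\<mu>) \<le> (\<integral>\<^sup>+ x. ennreal (\<psi> x) \<partial>\<nu>)"
proof -
  have layers: "(\<integral>\<^sup>+ x. ennreal (\<psi> x) \<partial>M)
      = (\<integral>\<^sup>+ s. indicator {0..} s * emeasure M {x. s < \<psi> x} \<partial>lborel)" if M: "real_law M" for M
  proof -
    have "sigma_finite_measure M"
      using M by (simp add: real_law_def prob_space_imp_sigma_finite)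
    moreover have "\<psi> \<in> borel_measurable M"
      by (rule real_law_borel_measurable[OF M borel_measurable_mono[OF assms(4)]])
    ultimately have "(\<integral>\<^sup>+ x. ennreal (\<psi> x) \<partial>M)
        = (\<integral>\<^sup>+ s. indicator {0..} s * emeasure M {x \<in> space M. s < \<psi> x} \<partial>lborel)"
      by (rule nn_integral_layer_cake) (rule assms(5))
    then show ?thesis
      by (simp only: real_law_sets_space(2)[OF M] UNIV_I simp_thms)
  qed
  have "emeasure \<mu> {x. s < \<psi> x} \<le> emeasure \<nu> {x. s < \<psi> x}" for s
  proof (rule st_le_up_closed[OF assms(1-3)])
    fix x y assume "x \<in> {x. s < \<psi> x}" "x \<le> y"
    then show "y \<in> {x. s < \<psi> x}"
      using monoD[OF assms(4)] by (auto intro: less_le_trans)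
  qed
  then show ?thesis
    unfolding layers[OF assms(1)] layers[OF assms(2)]
    by (auto intro!: nn_integral_mono mult_left_mono)
qed

lemma positive_part_law:
  assumes Z: "real_law Z"
  defines "Y \<equiv> distr Z borel (\<lambda>x. max x 0)"
  shows "positive_law Y"
    and "\<And>g. g \<in> borel_measurable borel \<Longrightarrow> (\<integral>\<^sup>+ x. g x \<partial>Y) = (\<integral>\<^sup>+ x. g (max x 0) \<partial>Z)"
proof -
  interpret Z: prob_space Z using Z by (simp add: real_law_def)
  have max_meas: "(\<lambda>x::real. max x 0) \<in> Z \<rightarrow>\<^sub>M borel"
    by (rule real_law_borel_measurable[OF Z]) measurable
  have "real_law Y"
    unfolding real_law_def Y_def using Z.prob_space_distr[OF max_meas] by simp
  moreover have "AE x in Y. 0 \<le> x"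
    unfolding Y_def by (subst AE_distr_iff[OF max_meas]) auto
  ultimately show "positive_law Y" by (simp add: positive_law_def)
  show "(\<integral>\<^sup>+ x. g x \<partial>Y) = (\<integral>\<^sup>+ x. g (max x 0) \<partial>Z)" if "g \<in> borel_measurable borel" for g
    unfolding Y_def by (rule nn_integral_distr[OF max_meas]) (use that in simp)
qed

lemma st_dominated_imp_icx_dominated:
  fixes X :: "'i \<Rightarrow> real measure"
  assumes p: "0 \<le> p" and X: "\<And>\<alpha>. positive_law (X \<alpha>)"
    and Z: "real_law Z" "finite_pth_moment p Z" "\<forall>\<alpha>. st_le (X \<alpha>) Z"
  shows "\<exists>Y. positive_law Y \<and> finite_pth_moment p Y \<and> (\<forall>\<alpha>. icx_le (X \<alpha>) Y)"
proof -
  define Y where "Y = distr Z borel (\<lambda>x. max x 0)"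
  have Y: "positive_law Y" and Y_int: "\<And>g. g \<in> borel_measurable borel
      \<Longrightarrow> (\<integral>\<^sup>+ x. g x \<partial>Y) = (\<integral>\<^sup>+ x. g (max x 0) \<partial>Z)"
    unfolding Y_def by (rule positive_part_law[OF Z(1)])+
  have "(\<integral>\<^sup>+ x. ennreal (\<bar>x\<bar> powr p) \<partial>Y) = (\<integral>\<^sup>+ x. ennreal (\<bar>max x 0\<bar> powr p) \<partial>Z)"
    by (rule Y_int) measurable
  also have "\<dots> \<le> (\<integral>\<^sup>+ x. ennreal (\<bar>x\<bar> powr p) \<partial>Z)"
    by (intro nn_integral_mono ennreal_leI powr_mono2 p) auto
  finally have "finite_pth_moment p Y"
    using Z(2) by (simp add: finite_pth_moment_def)
  moreover have "icx_le (X \<alpha>) Y" for \<alpha>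
    unfolding icx_le_def
  proof (intro allI impI)
    fix \<phi> :: "real \<Rightarrow> real"
    assume \<phi>: "mono_on {0..} \<phi> \<and> convex_on {0..} \<phi> \<and> (\<forall>x\<ge>0. 0 \<le> \<phi> x)"
    text \<open>Only the values on [0,\<infinity>) matter; extending \<phi> constantly to the left gives
      an increasing, hence measurable, function to which the stochastic order applies.\<close>
    define \<psi> where "\<psi> x = \<phi> (max x 0)" for x
    have \<psi>_mono: "mono \<psi>"
      unfolding \<psi>_def by (intro monoI mono_onD[of "{0..}" \<phi>]) (use \<phi> in auto)
    have \<psi>_nonneg: "0 \<le> \<psi> x" for x
      unfolding \<psi>_def using \<phi> by simp
    have X\<alpha>: "real_law (X \<alpha>)" "AE x in X \<alpha>. 0 \<le> x"
      using X[of \<alpha>] by (simp_all add: positive_law_def)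
    have "(\<integral>\<^sup>+ x. ennreal (\<phi> x) \<partial>X \<alpha>) = (\<integral>\<^sup>+ x. ennreal (\<psi> x) \<partial>X \<alpha>)"
      using X\<alpha>(2) by (intro nn_integral_cong_AE) (auto simp: \<psi>_def)
    also have "\<dots> \<le> (\<integral>\<^sup>+ x. ennreal (\<psi> x) \<partial>Z)"
      using Z(3) by (intro st_le_nn_integral_mono[OF X\<alpha>(1) Z(1) _ \<psi>_mono \<psi>_nonneg]) blast
    also have "\<dots> = (\<integral>\<^sup>+ x. ennreal (\<psi> (max x 0)) \<partial>Z)"
      by (simp add: \<psi>_def)
    also have "\<dots> = (\<integral>\<^sup>+ x. ennreal (\<psi> x) \<partial>Y)"
      using borel_measurable_mono[OF \<psi>_mono] by (intro Y_int[symmetric]) measurable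
    also have "\<dots> = (\<integral>\<^sup>+ x. ennreal (\<phi> x) \<partial>Y)"
      using Y by (intro nn_integral_cong_AE) (auto simp: \<psi>_def positive_law_def)
    finally show "(\<integral>\<^sup>+ x. ennreal (\<phi> x) \<partial>X \<alpha>) \<le> (\<integral>\<^sup>+ x. ennreal (\<phi> x) \<partial>Y)" .
  qed
  ultimately show ?thesis using Y by blast
qed

lemma convex_on_max:
  fixes f g :: "'a::real_vector \<Rightarrow> real"
  assumes f: "convex_on S f" and g: "convex_on S g"
  shows "convex_on S (\<lambda>x. max (f x) (g x))"
proof (rule convex_onI)
  show "convex S" using f by (rule convex_on_imp_convex)
  fix t :: real and x y assume t: "0 < t" "t < 1" and xy: "x \<in> S" "y \<in> S"
  have "f ((1 - t) *\<^sub>R x + t *\<^sub>R y) \<le> (1 - t) * f x + t * f y"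
    using convex_onD[OF f] t xy by simp
  also have "\<dots> \<le> (1 - t) * max (f x) (g x) + t * max (f y) (g y)"
    using t by (intro add_mono mult_left_mono) auto
  finally have "f ((1 - t) *\<^sub>R x + t *\<^sub>R y) \<le> (1 - t) * max (f x) (g x) + t * max (f y) (g y)" .
  moreover have "g ((1 - t) *\<^sub>R x + t *\<^sub>R y) \<le> (1 - t) * g x + t * g y"
    using convex_onD[OF g] t xy by simp
  moreover have "\<dots> \<le> (1 - t) * max (f x) (g x) + t * max (f y) (g y)"
    using t by (intro add_mono mult_left_mono) auto
  ultimately show "max (f ((1 - t) *\<^sub>R x + t *\<^sub>R y)) (g ((1 - t) *\<^sub>R x + t *\<^sub>R y))
      \<le> (1 - t) * max (f x) (g x) + t * max (f y) (g y)"
    by simp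
qed

lemma icx_le_stop_loss:
  fixes c :: real
  assumes "icx_le \<mu> \<nu>"
  shows "(\<integral>\<^sup>+ x. ennreal (max (x - c) 0) \<partial>\<mu>) \<le> (\<integral>\<^sup>+ x. ennreal (max (x - c) 0) \<partial>\<nu>)"
proof -
  have "convex_on {0..} (\<lambda>x. max (x - c) 0)"
    by (intro convex_on_max convex_on_diff) (auto simp: convex_on_ident convex_on_const concave_on_const)
  moreover have "mono_on {0..} (\<lambda>x. max (x - c) 0)"
    by (intro mono_onI) auto
  moreover have "\<forall>x\<ge>0. 0 \<le> max (x - c) 0"
    by simp
  ultimately show ?thesis
    using assms unfolding icx_le_def by blast
qed

lemma tail_le_stop_loss:
  fixes c :: real
  assumes "sets \<mu> = sets borel" "0 \<le> c"
  shows "ennreal c * emeasure \<mu> {2 * c<..} \<le> (\<integral>\<^sup>+ x. ennreal (max (x - c) 0) \<partial>\<mu>)"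
proof -
  have "ennreal c * emeasure \<mu> {2 * c<..} = (\<integral>\<^sup>+ x. ennreal c * indicator {2 * c<..} x \<partial>\<mu>)"
    using assms(1) by (simp add: nn_integral_cmult_indicator)
  also have "\<dots> \<le> (\<integral>\<^sup>+ x. ennreal (max (x - c) 0) \<partial>\<mu>)"
    by (intro nn_integral_mono) (auto simp: indicator_def intro: ennreal_leI)
  finally show ?thesis .
qed

lemma dyadic_bracket:
  fixes t :: real
  assumes "1 \<le> t"
  obtains n :: nat where "2 ^ n \<le> t" "t < 2 ^ (n + 1)"
proof -
  define n where "n = nat \<lfloor>log 2 t\<rfloor>"
  have "0 \<le> log 2 t" using assms by simp
  then have "real_of_int \<lfloor>log 2 t\<rfloor> = real n" unfolding n_def by simp
  then have "2 powr real n \<le> t \<and> t < 2 powr (real n + 1)"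
    using floor_log_eq_powr_iff[of t 2 "\<lfloor>log 2 t\<rfloor>"] assms by simp
  then show ?thesis using that[of n] by (simp add: powr_add powr_realpow)
qed

lemma dyadic_powr: "((2::real) ^ k) powr q = (2 powr q) ^ k"
  by (simp add: powr_realpow[symmetric] powr_powr powr_power mult.commute)

text \<open>Pointwise bound: with r = 2^(p-1) > 1, the weighted sum of dyadic hinges is
  dominated by a multiple of |x|^p, since only the terms with 2^k < x contribute and
  their geometric sum is governed by the largest one.\<close>

lemma dyadic_hinge_sum_le:
  fixes p x :: real
  assumes p: "1 < p"
  defines "r \<equiv> 2 powr (p - 1)"
  shows "(\<Sum>k. ennreal (r ^ k * max (x - 2 ^ k) 0)) \<le> ennreal (r / (r - 1) * \<bar>x\<bar> powr p)"
proof (cases "x < 1")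
  case True
  have "x \<le> 2 ^ k" for k :: nat
    using True one_le_power[of "2::real" k] by linarith
  then show ?thesis by (simp add: max_def)
next
  case False
  have r1: "1 < r" unfolding r_def using p by simp
  obtain n where n: "2 ^ n \<le> x" "x < 2 ^ (n + 1)"
    using dyadic_bracket[of x] False by auto
  have vanish: "ennreal (r ^ k * max (x - 2 ^ k) 0) = 0" if "k \<notin> {..<n + 1}" for k
  proof -
    have "(2::real) ^ (n + 1) \<le> 2 ^ k" using that by (intro power_increasing) auto
    then show ?thesis using n by (simp add: max_def)
  qed
  have "(\<Sum>k. ennreal (r ^ k * max (x - 2 ^ k) 0))
      = (\<Sum>k<n + 1. ennreal (r ^ k * max (x - 2 ^ k) 0))"
    by (rule suminf_finite) (use vanish in auto)
  also have "\<dots> = ennreal (\<Sum>k<n + 1. r ^ k * max (x - 2 ^ k) 0)"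
    using r1 by (intro sum_ennreal) auto
  also have "\<dots> \<le> ennreal (r / (r - 1) * \<bar>x\<bar> powr p)"
  proof (intro ennreal_leI)
    have "(\<Sum>k<n + 1. r ^ k * max (x - 2 ^ k) 0) \<le> (\<Sum>k<n + 1. r ^ k * x)"
      using r1 False by (intro sum_mono mult_left_mono) auto
    also have "\<dots> = x * (\<Sum>k<n + 1. r ^ k)"
      by (simp only: sum_distrib_left mult.commute)
    also have "\<dots> = x * ((r ^ (n + 1) - 1) / (r - 1))"
      using r1 by (simp only: geometric_sum)
    also have "\<dots> \<le> x * (r * r ^ n / (r - 1))"
      using r1 False by (intro mult_left_mono divide_right_mono) auto
    also have "\<dots> \<le> x * (r * x powr (p - 1) / (r - 1))"
    proof -
      have "r ^ n = (2 ^ n) powr (p - 1)" unfolding r_def by (rule dyadic_powr[symmetric])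
      also have "\<dots> \<le> x powr (p - 1)" using n p by (intro powr_mono2) auto
      finally show ?thesis
        using r1 False by (intro mult_left_mono divide_right_mono) auto
    qed
    also have "\<dots> = r / (r - 1) * (x * x powr (p - 1))"
      by (simp add: ac_simps)
    also have "\<dots> = r / (r - 1) * \<bar>x\<bar> powr p"
      using False by (simp add: powr_mult_base)
    finally show "(\<Sum>k<n + 1. r ^ k * max (x - 2 ^ k) 0) \<le> r / (r - 1) * \<bar>x\<bar> powr p" .
  qed
  finally show ?thesis .
qed

lemma dyadic_stop_loss_summable:
  fixes p :: real
  assumes p: "1 < p" and Y: "real_law Y" "finite_pth_moment p Y"
  shows "(\<Sum>k. ennreal ((2 powr (p - 1)) ^ k) * (\<integral>\<^sup>+ x. ennreal (max (x - 2 ^ k) 0) \<partial>Y)) < \<infinity>"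
proof -
  define r where "r = (2::real) powr (p - 1)"
  have r1: "1 < r" unfolding r_def using p by simp
  have "(\<Sum>k. ennreal (r ^ k) * (\<integral>\<^sup>+ x. ennreal (max (x - 2 ^ k) 0) \<partial>Y))
      = (\<Sum>k. \<integral>\<^sup>+ x. ennreal (r ^ k * max (x - 2 ^ k) 0) \<partial>Y)"
  proof (rule suminf_cong)
    fix k :: nat
    have "(\<lambda>x. ennreal (max (x - 2 ^ k) 0)) \<in> borel_measurable Y"
      by (rule real_law_borel_measurable[OF Y(1)]) measurable
    then show "ennreal (r ^ k) * (\<integral>\<^sup>+ x. ennreal (max (x - 2 ^ k) 0) \<partial>Y)
        = (\<integral>\<^sup>+ x. ennreal (r ^ k * max (x - 2 ^ k) 0) \<partial>Y)"
      using r1 by (simp add: nn_integral_cmult[symmetric] ennreal_mult)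
  qed
  also have "\<dots> = (\<integral>\<^sup>+ x. (\<Sum>k. ennreal (r ^ k * max (x - 2 ^ k) 0)) \<partial>Y)"
    by (rule nn_integral_suminf[symmetric]) (rule real_law_borel_measurable[OF Y(1)], measurable)
  also have "\<dots> \<le> (\<integral>\<^sup>+ x. ennreal (r / (r - 1)) * ennreal (\<bar>x\<bar> powr p) \<partial>Y)"
    using dyadic_hinge_sum_le[OF p] r1
    by (intro nn_integral_mono) (simp add: r_def flip: ennreal_mult)
  also have "\<dots> = ennreal (r / (r - 1)) * (\<integral>\<^sup>+ x. ennreal (\<bar>x\<bar> powr p) \<partial>Y)"
    by (rule nn_integral_cmult) (rule real_law_borel_measurable[OF Y(1)], measurable)
  also have "\<dots> < \<infinity>"
    using Y(2) by (simp add: finite_pth_moment_def ennreal_mult_less_top)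
  finally show ?thesis unfolding r_def .
qed

lemma discrete_real_law:
  fixes f v :: "nat \<Rightarrow> real"
  assumes f_nonneg: "\<And>k. 0 \<le> f k" and f_sums: "f sums 1"
  obtains Z where "real_law Z"
    and "\<And>g. g \<in> borel_measurable borel \<Longrightarrow> (\<integral>\<^sup>+ x. g x \<partial>Z) = (\<Sum>k. ennreal (f k) * g (v k))"
proof -
  have "(\<integral>\<^sup>+ k. ennreal (f k) \<partial>count_space UNIV) = 1"
    using f_sums f_nonneg
    by (simp add: nn_integral_count_space_nat suminf_ennreal2 sums_summable sums_unique[symmetric])
  then have pmf_f: "pmf (embed_pmf f) k = f k" for k
    by (rule pmf_embed_pmf[OF f_nonneg])
  define Z where "Z = distr (measure_pmf (embed_pmf f)) borel v"
  have v_meas: "v \<in> measure_pmf (embed_pmf f) \<rightarrow>\<^sub>M borel" by simp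
  show ?thesis
  proof (rule that)
    show "real_law Z"
      unfolding real_law_def Z_def by (simp add: measure_pmf.prob_space_distr[OF v_meas])
  next
    fix g :: "real \<Rightarrow> ennreal" assume "g \<in> borel_measurable borel"
    then have "(\<integral>\<^sup>+ x. g x \<partial>Z) = (\<integral>\<^sup>+ k. g (v k) \<partial>measure_pmf (embed_pmf f))"
      unfolding Z_def by (intro nn_integral_distr[OF v_meas]) simp
    also have "\<dots> = (\<Sum>k. ennreal (f k) * g (v k))"
      by (simp add: nn_integral_measure_pmf nn_integral_count_space_nat pmf_f)
    finally show "(\<integral>\<^sup>+ x. g x \<partial>Z) = (\<Sum>k. ennreal (f k) * g (v k))" .
  qed
qed

text \<open>Dropping an initial segment, the tail of a summable nonnegative sequence has sum less
  than 1 and can be completed to a probability sequence by an extra atom.\<close>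

lemma complete_tail_to_distribution:
  fixes w :: "nat \<Rightarrow> real"
  assumes w_nonneg: "\<And>k. 0 \<le> w k" and "summable w"
  obtains N f where "\<And>k. 0 \<le> f k" "f sums 1" "\<And>j. f (Suc j) = w (j + N)"
proof -
  obtain N where N: "norm (\<Sum>j. w (j + N)) < 1"
    using suminf_exist_split[of 1 w] \<open>summable w\<close> by auto
  define S where "S = (\<Sum>j. w (j + N))"
  have w_tail_sums: "(\<lambda>j. w (j + N)) sums S"
    unfolding S_def using \<open>summable w\<close> by (intro summable_sums summable_ignore_initial_segment)
  have S: "0 \<le> S" "S < 1"
    using N w_nonneg w_tail_sums by (auto simp: S_def intro: suminf_nonneg sums_summable)
  define f where "f k = (case k of 0 \<Rightarrow> 1 - S | Suc j \<Rightarrow> w (j + N))" for k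
  have "(\<lambda>j. f (Suc j)) sums S"
    using w_tail_sums by (simp add: f_def)
  then have "f sums (S + f 0)"
    by (simp add: sums_Suc_iff)
  then have f_sums: "f sums 1"
    by (simp add: f_def)
  have f_nonneg: "0 \<le> f k" for k
    using S w_nonneg by (cases k) (auto simp: f_def)
  have f_Suc: "f (Suc j) = w (j + N)" for j
    by (simp add: f_def)
  show ?thesis
    by (rule that[OF f_nonneg f_sums f_Suc])
qed

text \<open>A discrete law with mass f_k at 2^(N+k+1) stochastically dominates any law whose tail
  beyond 2^(N+j+1) is at most f_(j+1): below 2^(N+1) its tail is 1, and above it the
  atom just beyond t already carries enough mass.\<close>

lemma dyadic_law_st_dominates:
  fixes f :: "nat \<Rightarrow> real" and N :: nat
  assumes Z: "real_law Z" and \<mu>: "real_law \<mu>"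
    and f_nonneg: "\<And>k. 0 \<le> f k" and f_sums: "f sums 1"
    and Z_tail: "\<And>t. emeasure Z {t<..} = (\<Sum>k. ennreal (f k) * indicator {t<..} (2 ^ (N + k + 1)))"
    and tails: "\<And>j t. 2 ^ (N + j + 1) \<le> t \<Longrightarrow> measure \<mu> {t<..} \<le> f (Suc j)"
  shows "st_le \<mu> Z"
  unfolding st_le_def
proof
  fix t :: real
  interpret Z: prob_space Z using Z by (simp add: real_law_def)
  interpret \<mu>: prob_space \<mu> using \<mu> by (simp add: real_law_def)
  show "measure \<mu> {t<..} \<le> measure Z {t<..}"
  proof (cases "t < 2 ^ (N + 1)")
    case True
    have "t < 2 ^ (N + k + 1)" for k
    proof -
      have "(2::real) ^ (N + 1) \<le> 2 ^ (N + k + 1)"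
        by (intro power_increasing) auto
      then show ?thesis using True by linarith
    qed
    then have "emeasure Z {t<..} = (\<Sum>k. ennreal (f k))"
      by (simp add: Z_tail)
    also have "\<dots> = 1"
      using f_sums f_nonneg by (simp add: suminf_ennreal2 sums_summable sums_unique[symmetric])
    finally have "measure Z {t<..} = 1"
      by (simp add: Z.emeasure_eq_measure)
    then show ?thesis by (simp add: \<mu>.prob_le_1)
  next
    case False
    then have "1 \<le> t"
      using one_le_power[of "2::real" "N + 1"] by linarith
    then obtain n where n: "2 ^ n \<le> t" "t < 2 ^ (n + 1)"
      by (rule dyadic_bracket)
    have "(2::real) ^ (N + 1) < 2 ^ (n + 1)"
      using False n(2) by linarith
    then have "N < n" by (simp add: power_strict_increasing_iff)
    then obtain j where j: "n = Suc (N + j)"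
      using less_imp_Suc_add by blast
    have "ennreal (measure \<mu> {t<..}) \<le> ennreal (f (Suc j))"
      using n(1) j by (intro ennreal_leI tails) simp
    also have "\<dots> = (\<Sum>k\<in>{Suc j}. ennreal (f k) * indicator {t<..} (2 ^ (N + k + 1)))"
      using n(2) j by simp
    also have "\<dots> \<le> emeasure Z {t<..}"
      unfolding Z_tail by (rule sum_le_suminf) auto
    finally show ?thesis
      by (simp add: Z.emeasure_eq_measure ennreal_le_iff)
  qed
qed

lemma st_dominating_law_from_dyadic_tails:
  fixes X :: "'i \<Rightarrow> real measure" and w :: "nat \<Rightarrow> real" and p :: real
  assumes p: "0 \<le> p" and X: "\<And>\<alpha>. real_law (X \<alpha>)"
    and w_nonneg: "\<And>k. 0 \<le> w k"
    and w_summable: "summable (\<lambda>k. w k * (2 ^ k) powr p)"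
    and tails: "\<And>\<alpha> k t. 2 ^ (k + 1) \<le> t \<Longrightarrow> measure (X \<alpha>) {t<..} \<le> w k"
  shows "\<exists>Z. real_law Z \<and> finite_pth_moment p Z \<and> (\<forall>\<alpha>. st_le (X \<alpha>) Z)"
proof -
  have "norm (w k) \<le> w k * (2 ^ k) powr p" for k
  proof -
    have "1 \<le> ((2::real) ^ k) powr p"
      using p by (intro ge_one_powr_ge_zero) auto
    then show ?thesis
      using w_nonneg[of k] by (simp add: mult_le_cancel_left1)
  qed
  then have "summable w"
    by (intro summable_comparison_test'[OF w_summable])
  then obtain N f where f_nonneg: "\<And>k. 0 \<le> f k" and f_sums: "f sums 1"
    and f_Suc: "\<And>j. f (Suc j) = w (j + N)"
    by (rule complete_tail_to_distribution[OF w_nonneg]) blast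
  define v where "v k = (2::real) ^ (N + k + 1)" for k
  obtain Z where Z: "real_law Z"
    and Z_int: "\<And>g. g \<in> borel_measurable borel \<Longrightarrow> (\<integral>\<^sup>+ x. g x \<partial>Z) = (\<Sum>k. ennreal (f k) * g (v k))"
    by (rule discrete_real_law[where v = v, OF f_nonneg f_sums]) blast
  have "f (Suc j) * v (Suc j) powr p = 4 powr p * (w (j + N) * (2 ^ (j + N)) powr p)" for j
  proof -
    have "v (Suc j) = 4 * 2 ^ (j + N)" by (simp add: v_def power_add)
    then show ?thesis by (simp add: f_Suc powr_mult)
  qed
  then have "summable (\<lambda>j. f (Suc j) * v (Suc j) powr p)"
    using summable_ignore_initial_segment[OF w_summable, of N] by (simp add: summable_mult)
  then have summ: "summable (\<lambda>k. f k * v k powr p)"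
    by (rule summable_Suc_iff[THEN iffD1])
  have "(\<integral>\<^sup>+ x. ennreal (\<bar>x\<bar> powr p) \<partial>Z) = (\<Sum>k. ennreal (f k) * ennreal (\<bar>v k\<bar> powr p))"
    by (rule Z_int) measurable
  also have "\<dots> = (\<Sum>k. ennreal (f k * v k powr p))"
    using f_nonneg by (simp add: v_def ennreal_mult)
  also have "\<dots> = ennreal (\<Sum>k. f k * v k powr p)"
    using summ f_nonneg by (intro suminf_ennreal2) auto
  finally have "finite_pth_moment p Z"
    by (simp add: finite_pth_moment_def)
  moreover have "st_le (X \<alpha>) Z" for \<alpha>
  proof (rule dyadic_law_st_dominates[OF Z X f_nonneg f_sums])
    fix t :: real
    have "emeasure Z {t<..} = (\<integral>\<^sup>+ x. indicator {t<..} x \<partial>Z)"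
      by (rule nn_integral_indicator[symmetric]) (simp add: real_law_sets_space(1)[OF Z])
    also have "\<dots> = (\<Sum>k. ennreal (f k) * indicator {t<..} (v k))"
      by (rule Z_int) measurable
    finally show "emeasure Z {t<..} = (\<Sum>k. ennreal (f k) * indicator {t<..} (2 ^ (N + k + 1)))"
      by (simp add: v_def)
  next
    fix j t assume "(2::real) ^ (N + j + 1) \<le> t"
    then show "measure (X \<alpha>) {t<..} \<le> f (Suc j)"
      unfolding f_Suc by (intro tails) (simp add: ac_simps)
  qed
  ultimately show ?thesis
    using Z by blast
qed

lemma icx_dominated_imp_st_dominated:
  fixes X :: "'i \<Rightarrow> real measure"
  assumes p: "1 < p" and X: "\<And>\<alpha>. real_law (X \<alpha>)"
    and Y: "real_law Y" "finite_pth_moment p Y" "\<forall>\<alpha>. icx_le (X \<alpha>) Y"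
  shows "\<exists>Z. real_law Z \<and> finite_pth_moment p Z \<and> (\<forall>\<alpha>. st_le (X \<alpha>) Z)"
proof -
  define r where "r = (2::real) powr (p - 1)"
  define \<pi> where "\<pi> k = (\<integral>\<^sup>+ x. ennreal (max (x - 2 ^ k) 0) \<partial>Y)" for k :: nat
  have r1: "1 < r" unfolding r_def using p by simp
  have sum_finite: "(\<Sum>k. ennreal (r ^ k) * \<pi> k) < \<infinity>"
    unfolding r_def \<pi>_def by (rule dyadic_stop_loss_summable[OF p Y(1,2)])
  have \<pi>_finite: "\<pi> k < \<infinity>" for k
    using ennreal_suminf_lessD[OF sum_finite, of k] r1 by (auto simp: ennreal_mult_less_top)
  define w where "w k = enn2real (\<pi> k) / 2 ^ k" for k
  have \<pi>_eq: "\<pi> k = ennreal (2 ^ k * w k)" for k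
    using \<pi>_finite[of k] by (simp add: w_def)
  have w_nonneg: "0 \<le> w k" for k
    by (simp add: w_def)
  have tails: "measure (X \<alpha>) {t<..} \<le> w k" if t: "2 ^ (k + 1) \<le> t" for \<alpha> k t
  proof -
    interpret X: prob_space "X \<alpha>" using X[of \<alpha>] by (simp add: real_law_def)
    have "ennreal (2 ^ k) * emeasure (X \<alpha>) {2 * 2 ^ k<..} \<le> (\<integral>\<^sup>+ x. ennreal (max (x - 2 ^ k) 0) \<partial>X \<alpha>)"
      using real_law_sets_space(1)[OF X] by (rule tail_le_stop_loss) simp
    also have "\<dots> \<le> \<pi> k"
      unfolding \<pi>_def using Y(3) by (intro icx_le_stop_loss) blast
    finally have "ennreal (2 ^ k * measure (X \<alpha>) {2 ^ (k + 1)<..}) \<le> ennreal (2 ^ k * w k)"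
      by (simp add: \<pi>_eq X.emeasure_eq_measure ennreal_mult)
    then have "measure (X \<alpha>) {2 ^ (k + 1)<..} \<le> w k"
      using w_nonneg[of k] by (simp add: ennreal_le_iff)
    moreover have "measure (X \<alpha>) {t<..} \<le> measure (X \<alpha>) {2 ^ (k + 1)<..}"
      using t real_law_sets_space(1)[OF X] by (intro X.finite_measure_mono) auto
    ultimately show ?thesis by linarith
  qed
  have "w k * (2 ^ k) powr p = enn2real (\<pi> k) * r ^ k" for k
  proof -
    have "((2::real) ^ k) powr p = 2 ^ k * (2 ^ k) powr (p - 1)"
      by (simp add: powr_mult_base)
    then show ?thesis by (simp add: w_def r_def dyadic_powr)
  qed
  moreover have "summable (\<lambda>k. enn2real (\<pi> k) * r ^ k)"
  proof (rule summable_suminf_not_top)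
    show "(\<Sum>k. ennreal (enn2real (\<pi> k) * r ^ k)) \<noteq> \<top>"
      using sum_finite \<pi>_finite r1 by (simp add: ennreal_mult mult.commute)
  qed (use r1 in simp)
  ultimately have "summable (\<lambda>k. w k * (2 ^ k) powr p)" by simp
  moreover have "0 \<le> p" using p by simp
  ultimately show ?thesis
    using st_dominating_law_from_dyadic_tails[of p X w] X w_nonneg tails by blast
qed

theorem mainTheorem3:
  fixes p :: real and X :: "'i \<Rightarrow> real measure"
  assumes "p > 1"
    and "\<And>\<alpha>. positive_law (X \<alpha>)"
  shows "(\<exists>Y. positive_law Y \<and> finite_pth_moment p Y \<and> (\<forall>\<alpha>. icx_le (X \<alpha>) Y))
     \<longleftrightarrow> (\<exists>Z. real_law Z \<and> finite_pth_moment p Z \<and> (\<forall>\<alpha>. st_le (X \<alpha>) Z))"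
proof -
  have X_law: "\<And>\<alpha>. real_law (X \<alpha>)"
    using assms(2) by (simp add: positive_law_def)
  show ?thesis
  proof
    assume "\<exists>Y. positive_law Y \<and> finite_pth_moment p Y \<and> (\<forall>\<alpha>. icx_le (X \<alpha>) Y)"
    then obtain Y where Y: "positive_law Y" "finite_pth_moment p Y" "\<forall>\<alpha>. icx_le (X \<alpha>) Y"
      by blast
    then have "real_law Y" by (simp add: positive_law_def)
    then show "\<exists>Z. real_law Z \<and> finite_pth_moment p Z \<and> (\<forall>\<alpha>. st_le (X \<alpha>) Z)"
      using icx_dominated_imp_st_dominated[OF assms(1) X_law _ Y(2,3)] by blast
  next
    assume "\<exists>Z. real_law Z \<and> finite_pth_moment p Z \<and> (\<forall>\<alpha>. st_le (X \<alpha>) Z)"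
    then obtain Z where Z: "real_law Z" "finite_pth_moment p Z" "\<forall>\<alpha>. st_le (X \<alpha>) Z"
      by blast
    have "0 \<le> p" using assms(1) by simp
    then show "\<exists>Y. positive_law Y \<and> finite_pth_moment p Y \<and> (\<forall>\<alpha>. icx_le (X \<alpha>) Y)"
      using st_dominated_imp_icx_dominated[OF _ assms(2) Z] by blast
  qed
qed

end
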